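(* Let $t\le k$ and $n$ be positive integers. If there exists an orthogonal array OA$(t,k,n)$, then there exists a large set of orthogonal arrays LOA$(t,k,n)$.
   Context: An orthogonal array OA$(t,k,n)$ is an $n^t\times k$ matrix with entries from $\mathbb{Z}_n$ such that in the submatrix formed by any $t$ columns each ordered $t$-tuple over $\mathbb{Z}_n$ occurs exactly once as a row. A large set of orthogonal arrays LOA$(t,k,n)$ is a set of $n^{k-t}$ orthogonal arrays OA$(t,k,n)$ such that each vector of length $k$ over $\mathbb{Z}_n$ occurs as a row in exactly one of them. *)

theory Defs
  imports Main
begin

definition zn_vec :: "nat \<Rightarrow> nat \<Rightarrow> nat list \<Rightarrow> bool" where
  "zn_vec n l v \<longleftrightarrow> length v = l \<and> (\<forall>x\<in>set v. x < n)"

definition is_OA :: "nat \<Rightarrow> nat \<Rightarrow> nat \<Rightarrow> nat list list \<Rightarrow> bool" where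
  "is_OA t k n A \<longleftrightarrow>
     length A = n ^ t \<and>
     (\<forall>r\<in>set A. zn_vec n k r) \<and>
     (\<forall>cs vs. length cs = t \<and> distinct cs \<and> set cs \<subseteq> {..<k} \<and> zn_vec n t vs \<longrightarrow>
        length (filter (\<lambda>r. map (\<lambda>c. r ! c) cs = vs) A) = 1)"

definition is_LOA :: "nat \<Rightarrow> nat \<Rightarrow> nat \<Rightarrow> nat list list list \<Rightarrow> bool" where
  "is_LOA t k n L \<longleftrightarrow>
     length L = n ^ (k - t) \<and>
     (\<forall>A\<in>set L. is_OA t k n A) \<and>
     (\<forall>v. zn_vec n k v \<longrightarrow> card {j. j < length L \<and> v \<in> set (L ! j)} = 1)"

end

theory Submission
  imports Defs
begin

text \<open>Adding a fixed vector u of Z_n^k to every row of an OA(t,k,n) A, coordinatewise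
  mod n, gives again an OA(t,k,n), because on any t columns the translation permutes
  Z_n^t. Take the n^(k-t) translates of A by the vectors (0,...,0,w) that vanish on
  the first t coordinates. A vector v lies in the translate by (0,...,0,w) iff v - r
  = (0,...,0,w) for a row r of A, i.e. iff r agrees with v on the first t columns and
  w is the tail of v - r. Exactly one row r of A has the prefix of v, so exactly one
  translate contains v.\<close>

lemma mod_add_eq_iff_eq_mod_sub:
  fixes a b c n :: nat
  assumes "a < n" "b < n" "c < n"
  shows "(a + b) mod n = c \<longleftrightarrow> a = (c + n - b) mod n"
  using assms by (auto simp: mod_if)

lemma mod_sub_eq_0_iff:
  fixes a b n :: nat
  assumes "a < n" "b < n"
  shows "(a + n - b) mod n = 0 \<longleftrightarrow> a = b"
  using assms by (auto simp: mod_if)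

lemma zn_vec_iff_nth: "zn_vec n l v \<longleftrightarrow> length v = l \<and> (\<forall>i<l. v ! i < n)"
  unfolding zn_vec_def by (auto simp: all_set_conv_all_nth)

lemma zn_vec_take: "zn_vec n l v \<Longrightarrow> t \<le> l \<Longrightarrow> zn_vec n t (take t v)"
  unfolding zn_vec_def by (auto dest: in_set_takeD)

lemma zn_vec_drop: "zn_vec n l v \<Longrightarrow> zn_vec n (l - t) (drop t v)"
  unfolding zn_vec_def by (auto dest: in_set_dropD)

lemma zn_vec_replicate_0_append:
  "0 < n \<Longrightarrow> zn_vec n l w \<Longrightarrow> zn_vec n (t + l) (replicate t 0 @ w)"
  unfolding zn_vec_def by auto

lemma zn_vec_map_nth:
  "zn_vec n l r \<Longrightarrow> set cs \<subseteq> {..<l} \<Longrightarrow> zn_vec n (length cs) (map ((!) r) cs)"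
  unfolding zn_vec_def by auto

definition zn_vec_add :: "nat \<Rightarrow> nat list \<Rightarrow> nat list \<Rightarrow> nat list" where
  "zn_vec_add n u r = map2 (\<lambda>a b. (a + b) mod n) u r"

definition zn_vec_sub :: "nat \<Rightarrow> nat list \<Rightarrow> nat list \<Rightarrow> nat list" where
  "zn_vec_sub n v r = map2 (\<lambda>a b. (a + n - b) mod n) v r"

lemma zn_vec_add_commute: "zn_vec_add n u r = zn_vec_add n r u"
  unfolding zn_vec_add_def by (rule nth_equalityI) (auto simp: add.commute)

lemma zn_vec_zn_vec_add:
  "0 < n \<Longrightarrow> length u = l \<Longrightarrow> length r = l \<Longrightarrow> zn_vec n l (zn_vec_add n u r)"
  unfolding zn_vec_iff_nth zn_vec_add_def by simp

lemma zn_vec_zn_vec_sub: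
  "0 < n \<Longrightarrow> length v = l \<Longrightarrow> length r = l \<Longrightarrow> zn_vec n l (zn_vec_sub n v r)"
  unfolding zn_vec_iff_nth zn_vec_sub_def by simp

lemma zn_vec_add_eq_iff:
  assumes "zn_vec n l u" "zn_vec n l r" "zn_vec n l v"
  shows "zn_vec_add n u r = v \<longleftrightarrow> u = zn_vec_sub n v r"
  using assms mod_add_eq_iff_eq_mod_sub
  unfolding zn_vec_iff_nth zn_vec_add_def zn_vec_sub_def by (auto simp: list_eq_iff_nth_eq)

lemma zn_vec_sub_eq_replicate_0_iff:
  assumes "zn_vec n l v" "zn_vec n l r"
  shows "zn_vec_sub n v r = replicate l 0 \<longleftrightarrow> v = r"
  using assms mod_sub_eq_0_iff
  unfolding zn_vec_iff_nth zn_vec_sub_def by (auto simp: list_eq_iff_nth_eq)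

lemma take_zn_vec_sub: "take t (zn_vec_sub n v r) = zn_vec_sub n (take t v) (take t r)"
  unfolding zn_vec_sub_def by (simp add: take_map take_zip)

lemma map_nth_zn_vec_add:
  assumes "set cs \<subseteq> {..<l}" "length u = l" "length r = l"
  shows "map ((!) (zn_vec_add n u r)) cs = zn_vec_add n (map ((!) u) cs) (map ((!) r) cs)"
proof (rule nth_equalityI)
  fix i assume "i < length (map ((!) (zn_vec_add n u r)) cs)"
  then have "cs ! i < l" using assms(1) nth_mem by fastforce
  then show "map ((!) (zn_vec_add n u r)) cs ! i = zn_vec_add n (map ((!) u) cs) (map ((!) r) cs) ! i"
    using assms \<open>i < _\<close> by (simp add: zn_vec_add_def)
qed (simp add: zn_vec_add_def)

lemma card_indices_ex1:
  assumes "distinct xs" "\<exists>!x. x \<in> set xs \<and> P x"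
  shows "card {j. j < length xs \<and> P (xs ! j)} = 1"
proof -
  obtain x where x: "x \<in> set xs" "P x" "\<And>y. y \<in> set xs \<Longrightarrow> P y \<Longrightarrow> y = x"
    using assms(2) by (elim ex1E) blast
  obtain j0 where j0: "j0 < length xs" "xs ! j0 = x" using x(1) by (metis in_set_conv_nth)
  have "{j. j < length xs \<and> P (xs ! j)} = {j0}"
  proof (intro set_eqI iffI)
    fix j assume "j \<in> {j. j < length xs \<and> P (xs ! j)}"
    then have j: "j < length xs" "P (xs ! j)" by auto
    then have "xs ! j = x" using x(3) nth_mem by blast
    then show "j \<in> {j0}" using nth_eq_iff_index_eq[OF assms(1) j(1) j0(1)] j0(2) by simp
  next
    fix j assume "j \<in> {j0}"
    then show "j \<in> {j. j < length xs \<and> P (xs ! j)}" using x(2) j0 by simp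
  qed
  then show ?thesis by simp
qed

lemma is_OA_rows: "is_OA t k n A \<Longrightarrow> r \<in> set A \<Longrightarrow> zn_vec n k r"
  unfolding is_OA_def by blast

lemma is_OA_ex1_row:
  assumes "is_OA t k n A" "length cs = t" "distinct cs" "set cs \<subseteq> {..<k}" "zn_vec n t vs"
  shows "\<exists>!r. r \<in> set A \<and> map ((!) r) cs = vs"
proof -
  have "length (filter (\<lambda>r. map ((!) r) cs = vs) A) = 1"
    using assms unfolding is_OA_def by blast
  then obtain r where "filter (\<lambda>r. map ((!) r) cs = vs) A = [r]"
    by (auto simp: length_Suc_conv)
  then have "set (filter (\<lambda>r. map ((!) r) cs = vs) A) = {r}"
    by simp
  then show ?thesis
    by (intro ex1I[of _ r]) (auto simp: set_eq_iff)
qed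

lemma is_OA_ex1_row_prefix:
  assumes A: "is_OA t k n A" and "t \<le> k" "zn_vec n t p"
  shows "\<exists>!r. r \<in> set A \<and> take t r = p"
proof -
  have prefix: "map ((!) r) [0..<t] = take t r" if "r \<in> set A" for r
  proof -
    have "length r = k" using is_OA_rows[OF A that] by (simp add: zn_vec_def)
    then show ?thesis using \<open>t \<le> k\<close> by (simp add: list_eq_iff_nth_eq)
  qed
  have "\<exists>!r. r \<in> set A \<and> map ((!) r) [0..<t] = p"
    by (rule is_OA_ex1_row[OF A]) (use assms in auto)
  moreover have "r \<in> set A \<and> map ((!) r) [0..<t] = p \<longleftrightarrow> r \<in> set A \<and> take t r = p" for r
    using prefix by auto
  ultimately show ?thesis by (simp only:)
qed

lemma is_OA_translate:
  assumes A: "is_OA t k n A" and u: "zn_vec n k u" and "0 < n"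
  shows "is_OA t k n (map (zn_vec_add n u) A)"
  unfolding is_OA_def
proof (intro conjI allI impI ballI)
  show "length (map (zn_vec_add n u) A) = n ^ t"
    using A by (simp add: is_OA_def)
  show "zn_vec n k r" if r: "r \<in> set (map (zn_vec_add n u) A)" for r
  proof -
    obtain r' where "r' \<in> set A" "r = zn_vec_add n u r'" using r by auto
    then show ?thesis
      using is_OA_rows[OF A] u \<open>0 < n\<close> zn_vec_zn_vec_add[of n u k r'] by (simp add: zn_vec_def)
  qed
next
  fix cs vs
  assume cs_vs: "length cs = t \<and> distinct cs \<and> set cs \<subseteq> {..<k} \<and> zn_vec n t vs"
  define vs' where "vs' = zn_vec_sub n vs (map ((!) u) cs)"
  have "map ((!) r) cs = vs' \<longleftrightarrow> map ((!) (zn_vec_add n u r)) cs = vs" if "r \<in> set A" for r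
  proof -
    have r: "zn_vec n k r" using is_OA_rows[OF A that] .
    then have "map ((!) (zn_vec_add n u r)) cs = zn_vec_add n (map ((!) r) cs) (map ((!) u) cs)"
      using map_nth_zn_vec_add[of cs k u r n] cs_vs u zn_vec_add_commute by (simp add: zn_vec_def)
    then show ?thesis
      using zn_vec_add_eq_iff zn_vec_map_nth[OF r] zn_vec_map_nth[OF u] cs_vs
      unfolding vs'_def by metis
  qed
  then have "filter (\<lambda>r. map ((!) r) cs = vs) (map (zn_vec_add n u) A)
      = map (zn_vec_add n u) (filter (\<lambda>r. map ((!) r) cs = vs') A)"
    by (simp add: filter_map o_def cong: filter_cong)
  moreover have "zn_vec n t vs'"
    using zn_vec_zn_vec_sub[OF \<open>0 < n\<close>, of vs t "map ((!) u) cs"] cs_vs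
    unfolding vs'_def zn_vec_def by simp
  ultimately show "length (filter (\<lambda>r. map ((!) r) cs = vs) (map (zn_vec_add n u) A)) = 1"
    using A cs_vs unfolding is_OA_def by simp
qed

lemma mem_translate_iff:
  assumes rows: "\<forall>r\<in>set A. zn_vec n l r" and "zn_vec n l u" "zn_vec n l v"
  shows "v \<in> set (map (zn_vec_add n u) A) \<longleftrightarrow> (\<exists>r\<in>set A. u = zn_vec_sub n v r)"
proof -
  have "v \<in> set (map (zn_vec_add n u) A) \<longleftrightarrow> (\<exists>r\<in>set A. zn_vec_add n u r = v)"
    by auto
  also have "\<dots> \<longleftrightarrow> (\<exists>r\<in>set A. u = zn_vec_sub n v r)"
    using zn_vec_add_eq_iff assms by (intro bex_cong) blast+
  finally show ?thesis .
qed

lemma replicate_0_append_eq_zn_vec_sub_iff: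
  assumes v: "zn_vec n k v" and r: "zn_vec n k r" and "t \<le> k"
  shows "replicate t 0 @ w = zn_vec_sub n v r \<longleftrightarrow>
    take t r = take t v \<and> w = drop t (zn_vec_sub n v r)"
proof -
  have "length (zn_vec_sub n v r) = k"
    using v r by (simp add: zn_vec_sub_def zn_vec_def)
  then have "replicate t 0 @ w = zn_vec_sub n v r \<longleftrightarrow>
      take t (zn_vec_sub n v r) = replicate t 0 \<and> w = drop t (zn_vec_sub n v r)"
    using \<open>t \<le> k\<close> by (auto simp: append_eq_conv_conj)
  also have "take t (zn_vec_sub n v r) = replicate t 0 \<longleftrightarrow> take t v = take t r"
    unfolding take_zn_vec_sub
    using zn_vec_sub_eq_replicate_0_iff zn_vec_take v r \<open>t \<le> k\<close> by blast
  finally show ?thesis by auto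
qed

lemma is_OA_ex1_tail_translate_mem:
  assumes A: "is_OA t k n A" and "t \<le> k" "0 < n" and v: "zn_vec n k v"
  shows "\<exists>!w. zn_vec n (k - t) w \<and> v \<in> set (map (zn_vec_add n (replicate t 0 @ w)) A)"
proof -
  have rows: "\<forall>r\<in>set A. zn_vec n k r" using is_OA_rows[OF A] by blast
  obtain r0 where r0: "r0 \<in> set A" "take t r0 = take t v"
    and r0_unique: "\<And>r. r \<in> set A \<Longrightarrow> take t r = take t v \<Longrightarrow> r = r0"
    using is_OA_ex1_row_prefix[OF A \<open>t \<le> k\<close> zn_vec_take[OF v \<open>t \<le> k\<close>]] by (elim ex1E) blast
  define w0 where "w0 = drop t (zn_vec_sub n v r0)"
  have mem_iff: "v \<in> set (map (zn_vec_add n (replicate t 0 @ w)) A) \<longleftrightarrow> w = w0"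
    if w: "zn_vec n (k - t) w" for w
  proof -
    have u: "zn_vec n k (replicate t 0 @ w)"
      using zn_vec_replicate_0_append[OF \<open>0 < n\<close> w, of t] \<open>t \<le> k\<close> by simp
    have "v \<in> set (map (zn_vec_add n (replicate t 0 @ w)) A) \<longleftrightarrow>
        (\<exists>r\<in>set A. take t r = take t v \<and> w = drop t (zn_vec_sub n v r))"
      unfolding mem_translate_iff[OF rows u v]
      using replicate_0_append_eq_zn_vec_sub_iff[OF v _ \<open>t \<le> k\<close>] rows by (intro bex_cong) blast+
    also have "\<dots> \<longleftrightarrow> w = w0"
      unfolding w0_def using r0 r0_unique by blast
    finally show ?thesis .
  qed
  have "zn_vec n (k - t) w0"
    unfolding w0_def using zn_vec_drop zn_vec_zn_vec_sub \<open>0 < n\<close> v r0 rows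
    by (metis zn_vec_def)
  then show ?thesis
    using mem_iff by (intro ex1I[of _ w0]) blast+
qed

theorem theorem3:
  fixes t k n :: nat
  assumes "0 < t" and "t \<le> k" and "0 < n"
    and "\<exists>A. is_OA t k n A"
  shows "\<exists>L. is_LOA t k n L"
proof -
  obtain A where A: "is_OA t k n A" using assms(4) by blast
  define W where "W = List.n_lists (k - t) [0..<n]"
  define L where "L = map (\<lambda>w. map (zn_vec_add n (replicate t 0 @ w)) A) W"
  have W: "set W = {w. zn_vec n (k - t) w}"
    unfolding W_def set_n_lists zn_vec_def by auto
  have "distinct W"
    unfolding W_def by (simp add: distinct_n_lists)
  have "length L = n ^ (k - t)"
    by (simp add: L_def W_def length_n_lists)
  moreover have "\<forall>B\<in>set L. is_OA t k n B"
    using is_OA_translate[OF A _ \<open>0 < n\<close>] zn_vec_replicate_0_append[OF \<open>0 < n\<close>, of "k - t" _ t]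
      W \<open>t \<le> k\<close> by (auto simp: L_def)
  moreover have "card {j. j < length L \<and> v \<in> set (L ! j)} = 1" if "zn_vec n k v" for v
  proof -
    let ?P = "\<lambda>w. v \<in> set (map (zn_vec_add n (replicate t 0 @ w)) A)"
    have "{j. j < length L \<and> v \<in> set (L ! j)} = {j. j < length W \<and> ?P (W ! j)}"
      by (auto simp: L_def)
    also have "card \<dots> = 1"
      using card_indices_ex1[OF \<open>distinct W\<close>, of ?P]
        is_OA_ex1_tail_translate_mem[OF A \<open>t \<le> k\<close> \<open>0 < n\<close> that] W by simp
    finally show ?thesis .
  qed
  ultimately show ?thesis
    unfolding is_LOA_def by blast
qed

end
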